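(* Let $\mathcal O$ be a set of operations with $\emptyset \neq \mathcal O \subseteq \{\cup,\cap,\overline{\phantom{c}},+,/\}$ and let $C$ be an $\mathcal O$-circuit. Then there exists a natural number $n \le 2^{|C|}+1$ such that for every natural number $z \ge n$ we have $z \in I(C)$ if and only if $n \in I(C)$.
   Context: Natural numbers include $0$. For $A,B\subseteq\mathbb N$: $A\cup B$, $A\cap B$ are the usual operations, $\overline{A}=\mathbb N\setminus A$, $A+B=\{a+b: a\in A, b\in B\}$, $A\times B=\{a\cdot b: a\in A, b\in B\}$, and $A/B=\{c\in\mathbb N:\exists a\in A\ \exists b\in B\setminus\{0\}: a=c\cdot b\}$ (exact integer division without remainder or rounding). For $\emptyset\ne\mathcal O\subseteq\{\cup,\cap,\overline{\phantom{c}},+,\times,/\}$, an $\mathcal O$-circuit $C=(V,E,g_C,\alpha)$ is a finite acyclic directed multigraph with gate set $V\subseteq\mathbb N$, every gate having indegree $0$, $1$ or $2$, a designated output gate $g_C\in V$, and a labeling $\alpha$: gates of indegree $0$ (input gates) are labeled by natural numbers, gates of indegree $1$ are labeled $\overline{\phantom{c}}$ (allowed only if $\overline{\phantom{c}}\in\mathcal O$), and gates of indegree $2$ are labeled by an operation in $\mathcal O\setminus\{\overline{\phantom{c}}\}$. The result set $I(g)\subseteq\mathbb N$ is defined inductively: $I(g)=\{\alpha(g)\}$ for an input gate; $I(g)=\mathbb N\setminus I(p)$ for a complement gate with predecessor $p$; $I(g)=I(g_1)\,\sigma\,I(g_2)$ for a gate labeled $\sigma$ with predecessors $g_1\le g_2$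 (a double edge from one gate gives $g_1=g_2$). $I(C)=I(g_C)$. A circuit is encoded as a bit string listing its gates in reverse topological order, each gate as the triple (gate name, label, list of predecessors), with all numbers (including input labels) in binary; $|C|$ denotes the length of this encoding. *)

theory Defs
  imports Main
begin

datatype op = Union | Inter | Compl | Plus | Times | Div

text \<open>A gate: an input gate labelled by a natural number, a complement gate with one
  predecessor (given by its gate name), or a binary gate with an operation and
  two predecessors g1 \<le> g2 (given by gate names; g1 = g2 models a double edge).\<close>
datatype gate = Inp nat | Cmp nat | Bin op nat nat

text \<open>A circuit: a list of named gates in topological order (each predecessor is
  the name of an earlier gate), together with the name of the output gate.
  Every finite acyclic multigraph admits such a listing.\<close>
record circuit =
  gates :: "(nat \<times> gate) list"
  outg :: nat

definition set_plus :: "nat set \<Rightarrow> nat set \<Rightarrow> nat set" where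
  "set_plus A B = {a + b | a b. a \<in> A \<and> b \<in> B}"

definition set_times :: "nat set \<Rightarrow> nat set \<Rightarrow> nat set" where
  "set_times A B = {a * b | a b. a \<in> A \<and> b \<in> B}"

definition set_div :: "nat set \<Rightarrow> nat set \<Rightarrow> nat set" where
  "set_div A B = {c. \<exists>a\<in>A. \<exists>b\<in>B - {0}. a = c * b}"

fun apply_op :: "op \<Rightarrow> nat set \<Rightarrow> nat set \<Rightarrow> nat set" where
  "apply_op Union A B = A \<union> B"
| "apply_op Inter A B = A \<inter> B"
| "apply_op Compl A B = UNIV - A"
| "apply_op Plus A B = set_plus A B"
| "apply_op Times A B = set_times A B"
| "apply_op Div A B = set_div A B"

fun preds :: "gate \<Rightarrow> nat list" where
  "preds (Inp a) = []"
| "preds (Cmp p) = [p]"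
| "preds (Bin o' p q) = [p, q]"

definition wf_circuit :: "op set \<Rightarrow> circuit \<Rightarrow> bool" where
  "wf_circuit Ops C \<longleftrightarrow>
     distinct (map fst (gates C)) \<and>
     outg C \<in> set (map fst (gates C)) \<and>
     (\<forall>i < length (gates C).
        set (preds (snd (gates C ! i))) \<subseteq> set (map fst (take i (gates C))) \<and>
        (case snd (gates C ! i) of
           Inp a \<Rightarrow> True
         | Cmp p \<Rightarrow> Compl \<in> Ops
         | Bin o' p q \<Rightarrow> o' \<in> Ops \<and> o' \<noteq> Compl \<and> p \<le> q))"

fun eval_step :: "(nat \<Rightarrow> nat set) \<Rightarrow> nat \<times> gate \<Rightarrow> (nat \<Rightarrow> nat set)" where
  "eval_step env (g, Inp a) = env(g := {a})"
| "eval_step env (g, Cmp p) = env(g := UNIV - env p)"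
| "eval_step env (g, Bin o' p q) = env(g := apply_op o' (env p) (env q))"

definition circuit_set :: "circuit \<Rightarrow> nat set" where
  "circuit_set C = foldl eval_step (\<lambda>_. {}) (gates C) (outg C)"

text \<open>Length of the binary representation of a natural number (bitlen 0 = 1).\<close>
fun bitlen :: "nat \<Rightarrow> nat" where
  "bitlen n = (if n < 2 then 1 else 1 + bitlen (n div 2))"

fun label_len :: "gate \<Rightarrow> nat" where
  "label_len (Inp a) = bitlen a"
| "label_len (Cmp p) = 1"
| "label_len (Bin o' p q) = 1"

text \<open>|C|: each gate encoded as (name, label, predecessor list), numbers in binary.\<close>
definition gate_size :: "nat \<times> gate \<Rightarrow> nat" where
  "gate_size g = bitlen (fst g) + label_len (snd g) + sum_list (map bitlen (preds (snd g)))"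

definition circuit_size :: "circuit \<Rightarrow> nat" where
  "circuit_size C = sum_list (map gate_size (gates C))"

end

theory Submission
  imports Defs
begin

text \<open>Membership in the value of every gate is constant beyond some threshold. A singleton
  \<open>{a}\<close> has threshold \<open>a + 1\<close>; complement keeps the threshold, and union, intersection,
  division and addition do not exceed the sum of the thresholds of their arguments. For
  addition: if \<open>S\<close> is eventually full then every large \<open>z\<close> is \<open>(z - b) + b\<close> with \<open>b \<in> T\<close>
  below its threshold, and otherwise all sums of elements below the thresholds stay below
  their sum. (Multiplication is the one operation without such a bound.) Evaluating the
  circuit gate by gate, a common bound \<open>2^k\<close> on the thresholds of all gates evaluated so far
  thus becomes \<open>2^(k + |g|)\<close> after gate \<open>g\<close>, because \<open>|g| \<ge> 1\<close> and an input gate labelled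
  \<open>a\<close> has threshold \<open>a + 1 \<le> 2^bitlen a\<close>; hence the output is constant from some
  \<open>n \<le> 2^|C|\<close> on.\<close>

definition stable_from :: "nat set \<Rightarrow> nat \<Rightarrow> bool" where
  "stable_from S t \<longleftrightarrow> (\<forall>z\<ge>t. z \<in> S \<longleftrightarrow> t \<in> S)"

lemma stable_from_mono: "stable_from S t \<Longrightarrow> t \<le> u \<Longrightarrow> stable_from S u"
  unfolding stable_from_def by (meson order_trans)

lemma stable_from_memberD: "stable_from S t \<Longrightarrow> t \<in> S \<Longrightarrow> t \<le> z \<Longrightarrow> z \<in> S"
  unfolding stable_from_def by blast

lemma stable_from_less: "stable_from S t \<Longrightarrow> t \<notin> S \<Longrightarrow> z \<in> S \<Longrightarrow> z < t"
  unfolding stable_from_def by (meson not_le)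

lemma stable_from_empty: "stable_from {} t"
  unfolding stable_from_def by blast

lemma stable_from_singleton: "stable_from {a} (Suc a)"
  unfolding stable_from_def by simp

lemma stable_from_Diff_UNIV: "stable_from S t \<Longrightarrow> stable_from (UNIV - S) t"
  unfolding stable_from_def by blast

lemma stable_from_Un: "stable_from S t \<Longrightarrow> stable_from T t \<Longrightarrow> stable_from (S \<union> T) t"
  unfolding stable_from_def by blast

lemma stable_from_Int: "stable_from S t \<Longrightarrow> stable_from T t \<Longrightarrow> stable_from (S \<inter> T) t"
  unfolding stable_from_def by blast

lemma stable_fromI: "(\<forall>z\<ge>t. z \<in> S) \<or> (\<forall>z\<ge>t. z \<notin> S) \<Longrightarrow> stable_from S t"
  unfolding stable_from_def by blast

lemma stable_from_ex_le: "stable_from S t \<Longrightarrow> S \<noteq> {} \<Longrightarrow> \<exists>a\<in>S. a \<le> t"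
  using stable_from_less by (meson ex_in_conv less_imp_le_nat order_refl)

lemma stable_from_set_plus:
  assumes S: "stable_from S s" and T: "stable_from T t"
  shows "stable_from (set_plus S T) (s + t)"
proof (cases "S = {} \<or> T = {}")
  case True
  then show ?thesis by (auto simp: set_plus_def stable_from_empty)
next
  case False
  then obtain a b where a: "a \<in> S" "a \<le> s" and b: "b \<in> T" "b \<le> t"
    using stable_from_ex_le[OF S] stable_from_ex_le[OF T] by blast
  show ?thesis
  proof (rule stable_fromI)
    consider "s \<in> S" | "t \<in> T" | "s \<notin> S" "t \<notin> T" by blast
    then show "(\<forall>z\<ge>s + t. z \<in> set_plus S T) \<or> (\<forall>z\<ge>s + t. z \<notin> set_plus S T)"
    proof cases
      case 1
      have "z \<in> set_plus S T" if z: "s + t \<le> z" for z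
      proof -
        have "z - b \<in> S"
          using stable_from_memberD[OF S 1] z b(2) by simp
        moreover have "z = (z - b) + b" using z b(2) by simp
        ultimately show ?thesis unfolding set_plus_def using b(1) by blast
      qed
      then show ?thesis by blast
    next
      case 2
      have "z \<in> set_plus S T" if z: "s + t \<le> z" for z
      proof -
        have "z - a \<in> T"
          using stable_from_memberD[OF T 2] z a(2) by simp
        moreover have "z = a + (z - a)" using z a(2) by simp
        ultimately show ?thesis unfolding set_plus_def using a(1) by blast
      qed
      then show ?thesis by blast
    next
      case 3
      have "z < s + t" if "z \<in> set_plus S T" for z
        using that stable_from_less[OF S 3(1)] stable_from_less[OF T 3(2)]
        unfolding set_plus_def by fastforce
      then show ?thesis by (meson not_le)
    qed
  qed
qed

lemma stable_from_set_div:
  assumes S: "stable_from S s"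
  shows "stable_from (set_div S T) s"
proof (rule stable_fromI)
  show "(\<forall>z\<ge>s. z \<in> set_div S T) \<or> (\<forall>z\<ge>s. z \<notin> set_div S T)"
  proof (cases "s \<in> S \<and> (\<exists>b\<in>T. 0 < b)")
    case True
    then obtain b where b: "b \<in> T" "0 < b" by blast
    have "z \<in> set_div S T" if "s \<le> z" for z
    proof -
      have "s \<le> z * b" using that b(2) by (simp add: le_trans)
      then have "z * b \<in> S" using stable_from_memberD[OF S] True by blast
      then show ?thesis unfolding set_div_def using b by blast
    qed
    then show ?thesis by blast
  next
    case False
    have "z \<notin> set_div S T" if "s \<le> z" for z
    proof
      assume "z \<in> set_div S T"
      then obtain b where "z * b \<in> S" "b \<in> T" "0 < b"
        unfolding set_div_def by blast
      moreover have "s \<le> z * b" using \<open>0 < b\<close> that by (simp add: le_trans)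
      ultimately show False
        using False stable_from_less[OF S] by (meson not_le)
    qed
    then show ?thesis by blast
  qed
qed

lemma stable_from_apply_op:
  assumes "oper \<noteq> Times" and A: "stable_from A s" and B: "stable_from B t"
  shows "stable_from (apply_op oper A B) (s + t)"
proof -
  have A': "stable_from A (s + t)" and B': "stable_from B (s + t)"
    using stable_from_mono[OF A] stable_from_mono[OF B] by simp_all
  show ?thesis
  proof (cases oper)
    case Union
    then show ?thesis using stable_from_Un[OF A' B'] by simp
  next
    case Inter
    then show ?thesis using stable_from_Int[OF A' B'] by simp
  next
    case Compl
    then show ?thesis using stable_from_Diff_UNIV[OF A'] by simp
  next
    case Plus
    then show ?thesis using stable_from_set_plus[OF A B] by simp
  next
    case Div
    then show ?thesis using stable_from_mono[OF stable_from_set_div[OF A]] by simp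
  qed (use assms(1) in simp)
qed

declare bitlen.simps [simp del]

lemma bitlen_pos: "0 < bitlen n"
  by (subst bitlen.simps) simp

lemma less_two_power_bitlen: "n < 2 ^ bitlen n"
proof (induction n rule: bitlen.induct)
  case (1 n)
  show ?case
  proof (cases "n < 2")
    case True
    then show ?thesis by (subst bitlen.simps) simp
  next
    case False
    then have "n div 2 < 2 ^ bitlen (n div 2)" using "1.IH" by simp
    then show ?thesis using False by (subst bitlen.simps) simp
  qed
qed

lemma gate_size_pos: "0 < gate_size x"
  by (simp add: gate_size_def bitlen_pos)

lemma Suc_input_le_two_power_gate_size: "Suc a \<le> 2 ^ gate_size (h, Inp a)"
proof -
  have "Suc a \<le> 2 ^ bitlen a" using less_two_power_bitlen by (rule Suc_leI)
  also have "\<dots> \<le> 2 ^ gate_size (h, Inp a)"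
    by (rule power_increasing) (simp_all add: gate_size_def)
  finally show ?thesis .
qed

definition stable_within :: "nat \<Rightarrow> (nat \<Rightarrow> nat set) \<Rightarrow> bool" where
  "stable_within b env \<longleftrightarrow> (\<forall>g. \<exists>t\<le>b. stable_from (env g) t)"

lemma stable_within_mono: "stable_within b env \<Longrightarrow> b \<le> c \<Longrightarrow> stable_within c env"
  unfolding stable_within_def by (meson order_trans)

lemma stable_within_fun_upd:
  "stable_within b env \<Longrightarrow> stable_from S t \<Longrightarrow> t \<le> b \<Longrightarrow> stable_within b (env(h := S))"
  unfolding stable_within_def by auto

lemma stable_withinD: "stable_within b env \<Longrightarrow> \<exists>t\<le>b. stable_from (env g) t"
  unfolding stable_within_def by blast

fun uses_Times :: "gate \<Rightarrow> bool" where
  "uses_Times (Bin oper p q) \<longleftrightarrow> oper = Times"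
| "uses_Times _ \<longleftrightarrow> False"

lemma stable_within_eval_step:
  assumes env: "stable_within (2 ^ k) env" and "\<not> uses_Times (snd x)"
  shows "stable_within (2 ^ (k + gate_size x)) (eval_step env x)"
proof -
  obtain h gt where x: "x = (h, gt)" by fastforce
  have "2 ^ Suc k \<le> (2::nat) ^ (k + gate_size x)"
    using gate_size_pos[of x] by (intro power_increasing) simp_all
  then have double: "2 ^ k + 2 ^ k \<le> (2::nat) ^ (k + gate_size x)" by simp
  then have env': "stable_within (2 ^ (k + gate_size x)) env"
    using stable_within_mono[OF env] by simp
  show ?thesis
  proof (cases gt)
    case (Inp a)
    have "Suc a \<le> 2 ^ gate_size x"
      using Suc_input_le_two_power_gate_size by (simp add: x Inp)
    also have "\<dots> \<le> 2 ^ (k + gate_size x)"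
      by (rule power_increasing) simp_all
    finally show ?thesis
      using stable_within_fun_upd[OF env' stable_from_singleton] by (simp add: x Inp)
  next
    case (Cmp p)
    obtain t where "t \<le> 2 ^ k" "stable_from (env p) t" using stable_withinD[OF env] by blast
    then show ?thesis
      using stable_within_fun_upd[OF env' stable_from_Diff_UNIV] double by (simp add: x Cmp)
  next
    case (Bin oper p q)
    obtain s t where "s \<le> 2 ^ k" "stable_from (env p) s" "t \<le> 2 ^ k" "stable_from (env q) t"
      using stable_withinD[OF env] by meson
    moreover have "oper \<noteq> Times" using assms(2) by (simp add: x Bin)
    ultimately show ?thesis
      using stable_within_fun_upd[OF env' stable_from_apply_op] double by (simp add: x Bin)
  qed
qed

lemma stable_within_foldl_eval_step:
  "\<forall>x\<in>set gs. \<not> uses_Times (snd x) \<Longrightarrow> stable_within (2 ^ k) env \<Longrightarrow>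
   stable_within (2 ^ (k + sum_list (map gate_size gs))) (foldl eval_step env gs)"
proof (induction gs arbitrary: env k)
  case Nil
  then show ?case by simp
next
  case (Cons x gs)
  then have "stable_within (2 ^ (k + gate_size x)) (eval_step env x)"
    by (simp add: stable_within_eval_step)
  with Cons.IH[of "k + gate_size x"] Cons.prems(1) show ?case by (simp add: add.assoc)
qed

lemma wf_circuit_not_uses_Times:
  assumes "wf_circuit Ops C" and "Times \<notin> Ops" and "x \<in> set (gates C)"
  shows "\<not> uses_Times (snd x)"
proof -
  obtain i where "i < length (gates C)" "x = gates C ! i"
    using assms(3) by (metis in_set_conv_nth)
  then have "case snd x of Inp a \<Rightarrow> True | Cmp p \<Rightarrow> Compl \<in> Ops
               | Bin oper p q \<Rightarrow> oper \<in> Ops \<and> oper \<noteq> Compl \<and> p \<le> q"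
    using assms(1) unfolding wf_circuit_def by blast
  then show ?thesis using assms(2) by (cases "snd x") auto
qed

theorem lemma1:
  fixes Ops :: "op set" and C :: circuit
  assumes "Ops \<noteq> {}" and "Ops \<subseteq> {Union, Inter, Compl, Plus, Div}"
    and "wf_circuit Ops C"
  shows "\<exists>n::nat. n \<le> 2 ^ circuit_size C + 1 \<and>
           (\<forall>z\<ge>n. z \<in> circuit_set C \<longleftrightarrow> n \<in> circuit_set C)"
proof -
  have "Times \<notin> Ops" using assms(2) by auto
  then have "\<forall>x\<in>set (gates C). \<not> uses_Times (snd x)"
    using wf_circuit_not_uses_Times[OF assms(3)] by blast
  moreover have "stable_within (2 ^ 0) (\<lambda>_. {})"
    unfolding stable_within_def by (meson le0 stable_from_empty)
  ultimately have "stable_within (2 ^ circuit_size C) (foldl eval_step (\<lambda>_. {}) (gates C))"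
    using stable_within_foldl_eval_step[of "gates C" 0] by (simp add: circuit_size_def)
  then have "\<exists>n\<le>2 ^ circuit_size C. stable_from (circuit_set C) n"
    unfolding circuit_set_def by (rule stable_withinD)
  then obtain n where "n \<le> 2 ^ circuit_size C" and "stable_from (circuit_set C) n" by blast
  then show ?thesis unfolding stable_from_def by (auto intro!: exI[of _ n])
qed

end
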